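(* Let $P$ be a finite graded bowtie-free poset of rank $n$ with $\hat0,\hat1$ and a good $\mathcal{H}_n(0)$ action $U_1,\dots,U_{n-1}$, and let $S\subseteq[n-1]$. Then every chain of $P$ whose elements other than $\hat0,\hat1$ have rank set exactly $S$ extends to exactly one maximal chain of $P$ whose descent set is contained in $S$.
   Context: Bowtie-free: no distinct $a,b,c,d$ with $a$ and $b$ each covering both $c$ and $d$. A good $\mathcal{H}_n(0)$ action is a family $U_1,\dots,U_{n-1}$ of maps on the set $\mathcal{M}(P)$ of maximal chains with: (1) $U_i(\mathfrak m)$ agrees with $\mathfrak m$ except possibly at rank $i$; (2) $U_i^2=U_i$; (3) $U_iU_j=U_jU_i$ for $|i-j|\ge2$; (4) $U_iU_{i+1}U_i=U_{i+1}U_iU_{i+1}$; (5) $\omega F_P(x)=\mathrm{ch}(\chi_P)$, where $\chi_P$ is the character of the representation of the 0-Hecke algebra $\mathcal{H}_n(0)$ on $\mathbb{C}\mathcal{M}(P)$ with $T_i$ acting as $-U_i$; $F_P(x)=\sum x_1^{\mathrm{rk}(t_0,t_1)}\cdots x_k^{\mathrm{rk}(t_{k-1},t_k)}$ over multichains $\hat0=t_0\le\cdots\le t_{k-1}<t_k=\hat1$; $L_{S,n}=\sum_{1\le i_1\le\cdots\le i_n,\ i_j<i_{j+1}\ (j\in S)}x_{i_1}\cdots x_{i_n}$; $\omega(L_{S,n})=L_{[n-1]\setminus S,n}$; $\mathrm{ch}$ linear with $\mathrm{ch}(\chi_S)=L_{S,n}$ for $\chi_S$ the character of the one-dimensional representation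 $T_i\mapsto-1$ ($i\in S$), $T_i\mapsto0$ ($i\notin S$). The descent set of a maximal chain $\mathfrak m$ is $\{i\in[n-1]:U_i(\mathfrak m)\ne\mathfrak m\}$. *)

theory Defs
  imports Main
begin

definition is_chain :: "'a::order set \<Rightarrow> 'a set \<Rightarrow> bool" where
  "is_chain P C \<longleftrightarrow> C \<subseteq> P \<and> (\<forall>x\<in>C. \<forall>y\<in>C. x \<le> y \<or> y \<le> x)"

definition maximal_chains :: "'a::order set \<Rightarrow> 'a set set" where
  "maximal_chains P = {C. is_chain P C \<and> (\<forall>D. is_chain P D \<and> C \<subseteq> D \<longrightarrow> D = C)}"

definition covers :: "'a::order set \<Rightarrow> 'a \<Rightarrow> 'a \<Rightarrow> bool" where
  "covers P y x \<longleftrightarrow> x \<in> P \<and> y \<in> P \<and> x < y \<and> \<not> (\<exists>z\<in>P. x < z \<and> z < y)"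

definition bowtie_free :: "'a::order set \<Rightarrow> bool" where
  "bowtie_free P \<longleftrightarrow> \<not> (\<exists>a\<in>P. \<exists>b\<in>P. \<exists>c\<in>P. \<exists>d\<in>P. distinct [a, b, c, d] \<and>
      covers P a c \<and> covers P a d \<and> covers P b c \<and> covers P b d)"

definition bounded_poset :: "'a::order set \<Rightarrow> 'a \<Rightarrow> 'a \<Rightarrow> bool" where
  "bounded_poset P zh oh \<longleftrightarrow> zh \<in> P \<and> oh \<in> P \<and> (\<forall>x\<in>P. zh \<le> x \<and> x \<le> oh)"

text \<open>Graded of rank n: every maximal chain has length n (i.e. n+1 elements).\<close>
definition graded_of_rank :: "'a::order set \<Rightarrow> nat \<Rightarrow> bool" where
  "graded_of_rank P n \<longleftrightarrow> (\<forall>C\<in>maximal_chains P. card C = n + 1)"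

text \<open>Rank of x: length of a longest chain in the interval below x (equal to the
  length of any maximal chain of [0-hat, x] in a graded poset).\<close>
definition rank :: "'a::order set \<Rightarrow> 'a \<Rightarrow> nat" where
  "rank P x = Max {card C - 1 | C. is_chain P C \<and> (\<forall>y\<in>C. y \<le> x)}"

text \<open>Monomials x_1^(a 1) x_2^(a 2) ... : exponent vectors with finite support,
  variables indexed from 1 (so a 0 = 0). A formal power series is identified with
  its coefficient function on monomials.\<close>
definition monomials :: "(nat \<Rightarrow> nat) set" where
  "monomials = {a. finite {i. a i \<noteq> 0} \<and> a 0 = 0}"

text \<open>Coefficient of x^a in F_P: multichains 0-hat = t_0 \<le> ... \<le> t_{k-1} < t_k = 1-hat
  (given as the list [t_0,...,t_k]) with monomial x_1^rk(t_0,t_1) ... x_k^rk(t_{k-1},t_k) = x^a.\<close>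
definition F_coeff :: "'a::order set \<Rightarrow> 'a \<Rightarrow> 'a \<Rightarrow> (nat \<Rightarrow> nat) \<Rightarrow> int" where
  "F_coeff P zh oh a = int (card {ts :: 'a list.
      let k = length ts - 1 in
      length ts \<ge> 2 \<and> set ts \<subseteq> P \<and> ts ! 0 = zh \<and> ts ! k = oh \<and>
      (\<forall>i. 1 \<le> i \<and> i \<le> k \<longrightarrow> ts ! (i - 1) \<le> ts ! i) \<and>
      ts ! (k - 1) < ts ! k \<and>
      (\<forall>i\<ge>1. a i = (if i \<le> k then rank P (ts ! i) - rank P (ts ! (i - 1)) else 0))})"

text \<open>Coefficient of x^a in the fundamental quasisymmetric function
  L_{S,n} = sum over 1 \<le> i_1 \<le> ... \<le> i_n with i_j < i_{j+1} for j \<in> S of x_{i_1}...x_{i_n}.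
  The index sequence (i_1,...,i_n) is a function on {1..n}, extended by 0.\<close>
definition L_coeff :: "nat set \<Rightarrow> nat \<Rightarrow> (nat \<Rightarrow> nat) \<Rightarrow> int" where
  "L_coeff S n a = int (card {ix :: nat \<Rightarrow> nat.
      (\<forall>j. j \<notin> {1..n} \<longrightarrow> ix j = 0) \<and> (\<forall>j\<in>{1..n}. 1 \<le> ix j) \<and>
      (\<forall>j\<in>{1..<n}. ix j \<le> ix (Suc j)) \<and> (\<forall>j\<in>S. ix j < ix (Suc j)) \<and>
      (\<forall>m\<ge>1. card {j\<in>{1..n}. ix j = m} = a m)})"

text \<open>Value of the character chi_P on the basis element T_{i_1} ... T_{i_k} (word [i_1,..,i_k])
  of H_n(0) acting on C M(P) with T_i acting as -U_i: the trace of
  (-U_{i_1}) o ... o (-U_{i_k}), i.e. (-1)^k times the number of fixed maximal chains.\<close>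
definition chi_P :: "'a::order set \<Rightarrow> (nat \<Rightarrow> 'a set \<Rightarrow> 'a set) \<Rightarrow> nat list \<Rightarrow> int" where
  "chi_P P U w = (-1) ^ length w *
      int (card {m \<in> maximal_chains P. foldr U w m = m})"

text \<open>Character chi_S of the one-dimensional representation T_i \<mapsto> -1 (i \<in> S), 0 (i \<notin> S).\<close>
definition chi_S :: "nat set \<Rightarrow> nat list \<Rightarrow> int" where
  "chi_S S w = prod_list (map (\<lambda>i. if i \<in> S then -1 else 0) w)"

text \<open>Writing chi_P = sum_S c_S chi_S (in the
  Grothendieck group; the chi_S are linearly independent, so c is unique),
  ch(chi_P) = sum_S c_S L_{S,n}; writing F_P = sum_S d_S L_{S,n},
  omega F_P = sum_S d_S L_{[n-1]-S,n}.\<close>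
definition omegaF_eq_ch :: "'a::order set \<Rightarrow> 'a \<Rightarrow> 'a \<Rightarrow> nat \<Rightarrow> (nat \<Rightarrow> 'a set \<Rightarrow> 'a set) \<Rightarrow> bool" where
  "omegaF_eq_ch P zh oh n U \<longleftrightarrow>
     (\<exists>c d :: nat set \<Rightarrow> int.
        (\<forall>w. set w \<subseteq> {1..<n} \<longrightarrow>
              chi_P P U w = (\<Sum>S\<in>Pow {1..<n}. c S * chi_S S w)) \<and>
        (\<forall>a\<in>monomials. F_coeff P zh oh a = (\<Sum>S\<in>Pow {1..<n}. d S * L_coeff S n a)) \<and>
        (\<forall>a\<in>monomials. (\<Sum>S\<in>Pow {1..<n}. d S * L_coeff ({1..<n} - S) n a)
                        = (\<Sum>S\<in>Pow {1..<n}. c S * L_coeff S n a)))"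

definition good_action ::
  "'a::order set \<Rightarrow> 'a \<Rightarrow> 'a \<Rightarrow> nat \<Rightarrow> (nat \<Rightarrow> 'a set \<Rightarrow> 'a set) \<Rightarrow> bool" where
  "good_action P zh oh n U \<longleftrightarrow>
     (\<forall>i\<in>{1..<n}. \<forall>m\<in>maximal_chains P. U i m \<in> maximal_chains P) \<and>
     (\<forall>i\<in>{1..<n}. \<forall>m\<in>maximal_chains P.
         {x \<in> U i m. rank P x \<noteq> i} = {x \<in> m. rank P x \<noteq> i}) \<and>
     (\<forall>i\<in>{1..<n}. \<forall>m\<in>maximal_chains P. U i (U i m) = U i m) \<and>
     (\<forall>i\<in>{1..<n}. \<forall>j\<in>{1..<n}. \<forall>m\<in>maximal_chains P.
         (i \<ge> j + 2 \<or> j \<ge> i + 2) \<longrightarrow> U i (U j m) = U j (U i m)) \<and>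
     (\<forall>i. i \<in> {1..<n} \<and> Suc i \<in> {1..<n} \<longrightarrow> (\<forall>m\<in>maximal_chains P.
         U i (U (Suc i) (U i m)) = U (Suc i) (U i (U (Suc i) m)))) \<and>
     omegaF_eq_ch P zh oh n U"

definition descents :: "nat \<Rightarrow> (nat \<Rightarrow> 'a set \<Rightarrow> 'a set) \<Rightarrow> 'a set \<Rightarrow> nat set" where
  "descents n U m = {i \<in> {1..<n}. U i m \<noteq> m}"

end

(*
  Let J = [n-1] - S. In the 0-Hecke monoid the generators U_i, i in J, are all absorbed by a
  word for the longest element of the parabolic submonoid they generate; its fixed points are
  exactly the maximal chains with descent set inside S. Hence chi_P evaluated at that word
  counts these chains, and condition (5), read off at the monomial x_1^(s_1) x_2^(s_2 - s_1) ...
  whose partial sums s_1 < s_2 < ... are the elements of S and n, turns this number into the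
  coefficient of that monomial in F_P, which is the number of chains with rank set
  S + {0, n}. Applying the absorbing word to a maximal extension of such a chain only changes
  ranks in J, so every such chain lies in a maximal chain with descents in S. Restriction to
  the ranks S + {0, n} is therefore a surjection between two finite sets of equal size, hence
  injective, which is the uniqueness.
*)
theory Submission
  imports Defs "HOL-Library.Infinite_Set"
begin

section \<open>0-Hecke monoid actions\<close>

locale zero_hecke_action =
  fixes M :: "'m set" and n :: nat and U :: "nat \<Rightarrow> 'm \<Rightarrow> 'm"
  assumes U_closed: "i \<in> {1..<n} \<Longrightarrow> m \<in> M \<Longrightarrow> U i m \<in> M"
    and U_idem: "i \<in> {1..<n} \<Longrightarrow> m \<in> M \<Longrightarrow> U i (U i m) = U i m"
    and U_commute: "i \<in> {1..<n} \<Longrightarrow> j \<in> {1..<n} \<Longrightarrow> i + 2 \<le> j \<Longrightarrow> m \<in> M \<Longrightarrow>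
      U i (U j m) = U j (U i m)"
    and U_braid: "i \<in> {1..<n} \<Longrightarrow> Suc i \<in> {1..<n} \<Longrightarrow> m \<in> M \<Longrightarrow>
      U i (U (Suc i) (U i m)) = U (Suc i) (U i (U (Suc i) m))"
begin

lemma foldr_closed: "set w \<subseteq> {1..<n} \<Longrightarrow> m \<in> M \<Longrightarrow> foldr U w m \<in> M"
  by (induction w) (auto intro: U_closed)

lemma foldr_commute:
  assumes "set w \<subseteq> {1..<n}" "i \<in> {1..<n}" "\<forall>j\<in>set w. i + 2 \<le> j \<or> j + 2 \<le> i" "m \<in> M"
  shows "foldr U w (U i m) = U i (foldr U w m)"
  using assms
proof (induction w)
  case (Cons j w)
  then have "U j (U i (foldr U w m)) = U i (U j (foldr U w m))"
    using U_commute foldr_closed by (metis insert_subset list.set(2) list.set_intros(1))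
  with Cons show ?case by simp
qed simp

lemma foldr_upt_shift:
  assumes "1 \<le> a" "a \<le> i" "i < b" "b < n" "m \<in> M"
  shows "foldr U [a..<Suc b] (U i m) = U (Suc i) (foldr U [a..<Suc b] m)"
proof -
  have split: "[a..<Suc b] = [a..<i] @ [i, Suc i] @ [Suc (Suc i)..<Suc b]"
    using assms upt_add_eq_append[of a i "Suc b - i"] by (simp add: upt_conv_Cons)
  define y where "y = foldr U [Suc (Suc i)..<Suc b] m"
  have y: "y \<in> M" unfolding y_def using assms by (intro foldr_closed) auto
  have "foldr U [Suc (Suc i)..<Suc b] (U i m) = U i y"
    unfolding y_def using assms by (intro foldr_commute) auto
  moreover have "U i (U (Suc i) (U i y)) = U (Suc i) (U i (U (Suc i) y))"
    using assms y by (intro U_braid) auto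
  moreover have "foldr U [a..<i] (U (Suc i) z) = U (Suc i) (foldr U [a..<i] z)" if "z \<in> M" for z
    using assms that by (intro foldr_commute) auto
  ultimately show ?thesis
    unfolding split using assms y by (simp add: U_closed y_def[symmetric] del: upt_Suc)
qed

lemma upt_word_absorbs:
  assumes ab: "1 \<le> a" "a \<le> b" "b < n"
    and J: "J \<subseteq> {1..<n}" "{a..b} \<subseteq> J" "a - 1 \<notin> J" "\<forall>j\<in>J. j \<le> b"
    and y: "y \<in> M" "\<And>j. j \<in> J - {b} \<Longrightarrow> U j y = y" and i: "i \<in> J"
  shows "U i (foldr U [a..<Suc b] y) = foldr U [a..<Suc b] y"
proof -
  have "i \<le> b" using J(4) i by blast
  consider "i = a" | "a < i" | "i < a" by linarith
  then show ?thesis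
  proof cases
    case 1
    then show ?thesis using ab y(1) by (simp add: upt_conv_Cons U_idem foldr_closed del: upt_Suc)
  next
    case 2
    then obtain i' where i': "i = Suc i'" "a \<le> i'" "i' < b" using \<open>i \<le> b\<close> by (cases i) auto
    then have "U i (foldr U [a..<Suc b] y) = foldr U [a..<Suc b] (U i' y)"
      unfolding i'(1) using ab y(1) i' by (intro foldr_upt_shift[symmetric])
    also have "U i' y = y" using J(2) i' by (intro y(2)) auto
    finally show ?thesis .
  next
    case 3
    have "i \<noteq> a - 1" using J(3) i by blast
    then have "i + 2 \<le> a" using 3 by linarith
    then have "U i (foldr U [a..<Suc b] y) = foldr U [a..<Suc b] (U i y)"
      using ab y(1) J(1) i by (intro foldr_commute[symmetric]) auto
    also have "U i y = y" using i 3 ab(2) by (intro y(2)) auto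
    finally show ?thesis .
  qed
qed

lemma run_ending_at:
  fixes J :: "nat set"
  assumes "b \<in> J" "0 \<notin> J"
  shows "\<exists>a. 1 \<le> a \<and> a \<le> b \<and> {a..b} \<subseteq> J \<and> a - 1 \<notin> J"
proof -
  define a where "a = (LEAST a. {a..b} \<subseteq> J)"
  have run: "{a..b} \<subseteq> J" unfolding a_def by (rule LeastI[of _ b]) (use assms in auto)
  have least: "a \<le> a'" if "{a'..b} \<subseteq> J" for a' unfolding a_def by (rule Least_le) (fact that)
  have "a \<le> b" using least[of b] assms by auto
  then have "1 \<le> a" using run assms(2) by (cases a) auto
  moreover have "a - 1 \<notin> J"
  proof
    assume "a - 1 \<in> J"
    moreover have "{a - 1..b} = insert (a - 1) {a..b}" using \<open>1 \<le> a\<close> \<open>a \<le> b\<close> by auto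
    ultimately show False using least[of "a - 1"] run \<open>1 \<le> a\<close> by simp
  qed
  ultimately show ?thesis using run \<open>a \<le> b\<close> by blast
qed

text \<open>A word for the longest element of the parabolic submonoid generated by the \<open>U i\<close>,
  \<open>i \<in> J\<close>: it absorbs every such generator. If \<open>b = Max J\<close> and \<open>{a..b}\<close> is the run of \<open>J\<close>
  ending in \<open>b\<close>, the word \<open>[a..b] @ w\<close> works, where \<open>w\<close> is such a word for \<open>J - {b}\<close>.\<close>
lemma absorbing_word_exists:
  assumes "J \<subseteq> {1..<n}"
  shows "\<exists>w. set w = J \<and> (\<forall>m\<in>M. \<forall>i\<in>J. U i (foldr U w m) = foldr U w m)"
proof -
  have "finite J" using assms finite_subset by blast
  then show ?thesis using assms
  proof (induction J rule: finite_remove_induct)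
    case (remove J)
    define b where "b = Max J"
    have b: "b \<in> J" "\<forall>j\<in>J. j \<le> b" "b < n" using remove.hyps remove.prems b_def by auto
    obtain a where a: "1 \<le> a" "a \<le> b" "{a..b} \<subseteq> J" "a - 1 \<notin> J"
    proof -
      have "0 \<notin> J" using remove.prems by auto
      then show ?thesis using run_ending_at[OF b(1)] that by blast
    qed
    obtain w where w: "set w = J - {b}" "\<forall>m\<in>M. \<forall>i\<in>J - {b}. U i (foldr U w m) = foldr U w m"
      using remove.IH[OF b(1)] remove.prems by blast
    have "foldr U w m \<in> M" if "m \<in> M" for m using w(1) remove.prems that by (intro foldr_closed) auto
    then have "\<forall>m\<in>M. \<forall>i\<in>J. U i (foldr U ([a..<Suc b] @ w) m) = foldr U ([a..<Suc b] @ w) m"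
      using upt_word_absorbs[OF a(1,2) b(3) remove.prems a(3,4) b(2)] w(2) by simp
    moreover have "set ([a..<Suc b] @ w) = J" using w a b by auto
    ultimately show ?case by blast
  qed simp
qed

lemma foldr_fixed_iff:
  assumes "set w = J" "\<forall>m\<in>M. \<forall>i\<in>J. U i (foldr U w m) = foldr U w m" "m \<in> M"
  shows "foldr U w m = m \<longleftrightarrow> (\<forall>i\<in>J. U i m = m)"
proof
  assume "foldr U w m = m"
  then show "\<forall>i\<in>J. U i m = m" using assms(2,3) by metis
next
  assume "\<forall>i\<in>J. U i m = m"
  with assms(1) show "foldr U w m = m" by (induction w arbitrary: J) auto
qed

end

section \<open>Fundamental quasisymmetric functions at composition monomials\<close>

text \<open>For \<open>0 = r 0 < r 1 < \<dots> < r K = n\<close> this is the monomial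
  \<open>x\<^sub>1^(r 1 - r 0) \<cdots> x\<^sub>K^(r K - r (K - 1))\<close>: its coefficient in \<open>L_{S,n}\<close> tests whether \<open>S\<close> lies
  in \<open>{r 1, \<dots>, r (K - 1)}\<close>, and its coefficient in \<open>F_P\<close> counts the chains with ranks
  \<open>r 0, \<dots>, r K\<close>. The index sequence \<open>standard_indices r n\<close> is the only one that can
  contribute to the former.\<close>
definition composition_monomial :: "(nat \<Rightarrow> nat) \<Rightarrow> nat \<Rightarrow> nat \<Rightarrow> nat" where
  "composition_monomial r K i = (if 1 \<le> i \<and> i \<le> K then r i - r (i - 1) else 0)"

definition standard_indices :: "(nat \<Rightarrow> nat) \<Rightarrow> nat \<Rightarrow> nat \<Rightarrow> nat" where
  "standard_indices r n j = (if j \<in> {1..n} then LEAST i. j \<le> r i else 0)"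

lemma composition_monomial_in_monomials: "composition_monomial r K \<in> monomials"
proof -
  have "{i. composition_monomial r K i \<noteq> 0} \<subseteq> {1..K}"
    by (auto simp: composition_monomial_def split: if_splits)
  then show ?thesis
    by (auto simp: monomials_def composition_monomial_def intro: finite_subset)
qed

context
  fixes r :: "nat \<Rightarrow> nat" and K n :: nat
  assumes r_mono: "strict_mono r" and r_0: "r 0 = 0" and r_K: "r K = n"
begin

lemma standard_indices_eq_iff:
  assumes j: "j \<in> {1..n}"
  shows "standard_indices r n j = i \<longleftrightarrow> 1 \<le> i \<and> i \<le> K \<and> r (i - 1) < j \<and> j \<le> r i"
proof -
  define i0 where "i0 = (LEAST i. j \<le> r i)"
  have "standard_indices r n j = i0" using j by (simp add: standard_indices_def i0_def)
  moreover have above: "j \<le> r i0" unfolding i0_def by (rule LeastI[of _ K]) (use j r_K in auto)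
  moreover have "i0 \<le> K" unfolding i0_def by (rule Least_le) (use j r_K in auto)
  moreover have "i0 \<noteq> 0" using above r_0 j by (cases "i0 = 0") auto
  moreover have below: "r (i0 - 1) < j"
    using not_less_Least[of "i0 - 1" "\<lambda>i. j \<le> r i"] \<open>i0 \<noteq> 0\<close> unfolding i0_def by simp
  moreover have "i = i0" if "1 \<le> i" "r (i - 1) < j" "j \<le> r i"
  proof (rule ccontr)
    assume "i \<noteq> i0"
    then consider "i \<le> i0 - 1" | "i0 \<le> i - 1" by linarith
    then show False
    proof cases
      case 1
      then have "r i \<le> r (i0 - 1)" using r_mono by (simp add: strict_mono_less_eq)
      then show False using below that by simp
    next
      case 2
      then have "r i0 \<le> r (i - 1)" using r_mono by (simp add: strict_mono_less_eq)
      then show False using above that by simp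
    qed
  qed
  ultimately show ?thesis by auto
qed

lemma standard_indices_content:
  assumes m: "1 \<le> m"
  shows "card {j \<in> {1..n}. standard_indices r n j = m} = composition_monomial r K m"
proof (cases "m \<le> K")
  case True
  have "r m \<le> n" using True r_mono r_K by (metis strict_mono_less_eq)
  have "{j \<in> {1..n}. standard_indices r n j = m} = {r (m - 1)<..r m}"
  proof (rule set_eqI)
    fix x
    show "x \<in> {j \<in> {1..n}. standard_indices r n j = m} \<longleftrightarrow> x \<in> {r (m - 1)<..r m}"
    proof (cases "x \<in> {1..n}")
      case True
      then show ?thesis using standard_indices_eq_iff[OF True, of m] \<open>m \<le> K\<close> m by auto
    qed (use \<open>r m \<le> n\<close> in auto)
  qed
  then show ?thesis using True m by (simp add: composition_monomial_def)
next
  case False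
  then have "{j \<in> {1..n}. standard_indices r n j = m} = {}"
    using standard_indices_eq_iff by blast
  then show ?thesis using False by (simp add: composition_monomial_def)
qed

lemma standard_indices_step:
  assumes j: "j \<in> {1..<n}"
  shows "standard_indices r n j \<le> standard_indices r n (Suc j)"
    and "standard_indices r n j < standard_indices r n (Suc j) \<longleftrightarrow> j \<in> r ` {1..<K}"
proof -
  have j1: "j \<in> {1..n}" and j2: "Suc j \<in> {1..n}" using j by auto
  define i where "i = standard_indices r n j"
  have i: "1 \<le> i" "i \<le> K" "r (i - 1) < j" "j \<le> r i"
    using standard_indices_eq_iff[OF j1, of i] i_def by auto
  have "i \<le> standard_indices r n (Suc j) \<and>
    (i < standard_indices r n (Suc j) \<longleftrightarrow> j \<in> r ` {1..<K})"
  proof (cases "j = r i")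
    case True
    have "i < K" using i True j r_K by (cases "i = K") auto
    moreover have "r i < r (Suc i)" using r_mono by (simp add: strict_mono_less)
    ultimately have "standard_indices r n (Suc j) = Suc i"
      using standard_indices_eq_iff[OF j2, of "Suc i"] True by simp
    moreover have "j \<in> r ` {1..<K}" using True \<open>i < K\<close> i by auto
    ultimately show ?thesis by simp
  next
    case False
    then have "standard_indices r n (Suc j) = i"
      using standard_indices_eq_iff[OF j2, of i] i by simp
    moreover have "j \<notin> r ` {1..<K}"
    proof
      assume "j \<in> r ` {1..<K}"
      then obtain i' where i': "j = r i'" by auto
      then have "i - 1 < i'" "i' < i"
        using i False r_mono by (auto simp: strict_mono_less le_less)
      then show False by simp
    qed
    ultimately show ?thesis by simp
  qed
  then show "standard_indices r n j \<le> standard_indices r n (Suc j)"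
    and "standard_indices r n j < standard_indices r n (Suc j) \<longleftrightarrow> j \<in> r ` {1..<K}"
    using i_def by auto
qed

end

lemma weakly_increasing_le_iff:
  fixes f :: "nat \<Rightarrow> nat"
  assumes mono: "\<forall>j\<in>{1..<n}. f j \<le> f (Suc j)" and j: "j \<in> {1..n}"
  shows "f j \<le> m \<longleftrightarrow> j \<le> card {j' \<in> {1..n}. f j' \<le> m}"
proof -
  have le: "f j' \<le> f j''" if "1 \<le> j'" "j' \<le> j''" "j'' \<le> n" for j' j''
    using that(2,3)
  proof (induction j'' rule: dec_induct)
    case (step k)
    then have "f k \<le> f (Suc k)" using mono that(1) by auto
    with step show ?case by simp
  qed simp
  show ?thesis
  proof
    assume "f j \<le> m"
    have "{1..j} \<subseteq> {j' \<in> {1..n}. f j' \<le> m}"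
    proof
      fix x assume "x \<in> {1..j}"
      then show "x \<in> {j' \<in> {1..n}. f j' \<le> m}" using le[of x j] j \<open>f j \<le> m\<close> by auto
    qed
    from card_mono[OF _ this] show "j \<le> card {j' \<in> {1..n}. f j' \<le> m}" by simp
  next
    assume c: "j \<le> card {j' \<in> {1..n}. f j' \<le> m}"
    show "f j \<le> m"
    proof (rule ccontr)
      assume "\<not> f j \<le> m"
      have "{j' \<in> {1..n}. f j' \<le> m} \<subseteq> {1..<j}"
      proof
        fix x assume x: "x \<in> {j' \<in> {1..n}. f j' \<le> m}"
        then have "\<not> j \<le> x" using le[of j x] j \<open>\<not> f j \<le> m\<close> by auto
        then show "x \<in> {1..<j}" using x by auto
      qed
      from card_mono[OF _ this] show False using c j by auto
    qed
  qed
qed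

lemma card_le_eq_sum_card_eq:
  fixes f :: "nat \<Rightarrow> nat"
  assumes "\<forall>j\<in>A. 1 \<le> f j" "finite A"
  shows "card {j \<in> A. f j \<le> m} = (\<Sum>m'\<in>{1..m}. card {j \<in> A. f j = m'})"
proof (induction m)
  case 0
  have empty: "{j \<in> A. f j \<le> 0} = {}" using assms(1) by auto
  show ?case by (simp only: empty card.empty) simp
next
  case (Suc m)
  have "{j \<in> A. f j \<le> Suc m} = {j \<in> A. f j \<le> m} \<union> {j \<in> A. f j = Suc m}" by auto
  moreover have "card (\<dots>) = card {j \<in> A. f j \<le> m} + card {j \<in> A. f j = Suc m}"
    using assms(2) by (intro card_Un_disjoint) auto
  ultimately show ?case using Suc by simp
qed

text \<open>A weakly increasing sequence \<open>{1..n} \<rightarrow> {1, 2, \<dots>}\<close> is determined by how often it takes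
  each value, since these multiplicities determine \<open>#{j. f j \<le> m}\<close> for every \<open>m\<close>.\<close>
lemma weakly_increasing_eqI:
  fixes f g :: "nat \<Rightarrow> nat"
  assumes "\<forall>j. j \<notin> {1..n} \<longrightarrow> f j = 0" "\<forall>j\<in>{1..n}. 1 \<le> f j" "\<forall>j\<in>{1..<n}. f j \<le> f (Suc j)"
    and "\<forall>j. j \<notin> {1..n} \<longrightarrow> g j = 0" "\<forall>j\<in>{1..n}. 1 \<le> g j" "\<forall>j\<in>{1..<n}. g j \<le> g (Suc j)"
    and "\<forall>m\<ge>1. card {j \<in> {1..n}. f j = m} = card {j \<in> {1..n}. g j = m}"
  shows "f = g"
proof
  fix j
  show "f j = g j"
  proof (cases "j \<in> {1..n}")
    case True
    have "card {j' \<in> {1..n}. f j' \<le> m} = card {j' \<in> {1..n}. g j' \<le> m}" for m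
    proof -
      have "(\<Sum>m'\<in>{1..m}. card {j\<in>{1..n}. f j = m'}) = (\<Sum>m'\<in>{1..m}. card {j\<in>{1..n}. g j = m'})"
        using assms(7) by (intro sum.cong) auto
      then show ?thesis
        using card_le_eq_sum_card_eq[of "{1..n}" f m] card_le_eq_sum_card_eq[of "{1..n}" g m] assms(2,5)
        by simp
    qed
    then have "f j \<le> m \<longleftrightarrow> g j \<le> m" for m
      using weakly_increasing_le_iff[OF assms(3) True] weakly_increasing_le_iff[OF assms(6) True]
      by simp
    then show ?thesis using le_antisym by blast
  qed (use assms in simp)
qed

lemma L_coeff_composition_monomial:
  assumes mono: "strict_mono r" and "r 0 = 0" "r K = n" and S: "S \<subseteq> {1..<n}"
  shows "L_coeff S n (composition_monomial r K) = (if S \<subseteq> r ` {1..<K} then 1 else 0)"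
proof -
  let ?f = "standard_indices r n"
  note std = standard_indices_eq_iff[OF assms(1-3)] standard_indices_content[OF assms(1-3)]
    standard_indices_step[OF assms(1-3)]
  have "1 \<le> ?f j" if "j \<in> {1..n}" for j
    using std(1)[OF that, of "?f j"] by simp
  then have f: "\<forall>j. j \<notin> {1..n} \<longrightarrow> ?f j = 0" "\<forall>j\<in>{1..n}. 1 \<le> ?f j"
    "\<forall>j\<in>{1..<n}. ?f j \<le> ?f (Suc j)"
    "\<forall>m\<ge>1. card {j\<in>{1..n}. ?f j = m} = composition_monomial r K m"
    using std(2,3) by (auto simp: standard_indices_def)
  have strict_iff: "(\<forall>j\<in>S. ?f j < ?f (Suc j)) \<longleftrightarrow> S \<subseteq> r ` {1..<K}"
    using std(4) S by blast
  define X where "X = {ix. (\<forall>j. j \<notin> {1..n} \<longrightarrow> ix j = 0) \<and> (\<forall>j\<in>{1..n}. 1 \<le> ix j) \<and>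
      (\<forall>j\<in>{1..<n}. ix j \<le> ix (Suc j)) \<and> (\<forall>j\<in>S. ix j < ix (Suc j)) \<and>
      (\<forall>m\<ge>1. card {j\<in>{1..n}. ix j = m} = composition_monomial r K m)}"
  have "ix = ?f" if "ix \<in> X" for ix
    using that unfolding X_def by (intro weakly_increasing_eqI[of n]) (use f in auto)
  then have "X \<subseteq> {?f}" by blast
  moreover have "?f \<in> X \<longleftrightarrow> S \<subseteq> r ` {1..<K}"
    unfolding X_def using f strict_iff by blast
  ultimately have "X = (if S \<subseteq> r ` {1..<K} then {?f} else {})" by auto
  then show ?thesis unfolding L_coeff_def X_def[symmetric] by simp
qed

lemma composition_exists:
  fixes T :: "nat set"
  assumes T: "T \<subseteq> {1..<n}" and n: "1 \<le> n"
  shows "\<exists>(r :: nat \<Rightarrow> nat) K. strict_mono r \<and> r 0 = 0 \<and> r K = n \<and> 1 \<le> K \<and> r ` {1..<K} = T"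
proof -
  define V where "V = insert 0 T \<union> {n..}"
  have V: "infinite V" using infinite_Ici[of n] by (auto simp: V_def dest: finite_subset[rotated])
  define r where "r = enumerate V"
  have mono: "strict_mono r" and range: "range r = V"
    using strict_mono_enumerate[OF V] range_enumerate[OF V] by (simp_all add: r_def)
  have r0: "r 0 = 0" by (simp add: r_def enumerate_0 V_def)
  obtain K where rK: "r K = n" using enumerate_Ex[OF V, of n] by (auto simp: V_def r_def)
  have "1 \<le> K" using rK r0 n by (cases K) auto
  moreover have "r ` {1..<K} = T"
  proof
    show "r ` {1..<K} \<subseteq> T"
    proof
      fix t assume "t \<in> r ` {1..<K}"
      then obtain i where i: "t = r i" "0 < i" "i < K" by auto
      then have "r 0 < r i" "r i < r K" using mono by (simp_all add: strict_mono_less)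
      moreover have "t \<in> V" using range i(1) by auto
      ultimately show "t \<in> T" using i(1) r0 rK by (auto simp: V_def)
    qed
    show "T \<subseteq> r ` {1..<K}"
    proof
      fix t assume t: "t \<in> T"
      then obtain i where "t = r i" using range by (auto simp: V_def)
      moreover have "r 0 < r i" "r i < r K" using t T r0 rK \<open>t = r i\<close> by auto
      ultimately show "t \<in> r ` {1..<K}" using mono by (auto simp: strict_mono_less)
    qed
  qed
  ultimately show ?thesis using mono r0 rK by blast
qed

lemma sum_Pow_complement:
  "finite A \<Longrightarrow> (\<Sum>S\<in>Pow A. g (A - S)) = (\<Sum>S\<in>Pow A. g S)"
  by (rule sum.reindex_bij_witness[of _ "\<lambda>S. A - S" "\<lambda>S. A - S"]) auto

lemma sum_Pow_if_subset:
  assumes "finite A" "T \<subseteq> A"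
  shows "(\<Sum>S\<in>Pow A. if S \<subseteq> T then x S else 0) = (\<Sum>S\<in>Pow T. x S)"
proof -
  have "{S \<in> Pow A. S \<subseteq> T} = Pow T" using assms(2) by auto
  then show ?thesis using sum.inter_filter[of "Pow A" x "\<lambda>S. S \<subseteq> T"] assms(1) by simp
qed

lemma sum_Pow_eq_imp_eq:
  fixes x y :: "'a set \<Rightarrow> 'b::ab_group_add"
  assumes "finite A" and sums: "\<And>T. T \<subseteq> A \<Longrightarrow> (\<Sum>S\<in>Pow T. x S) = (\<Sum>S\<in>Pow T. y S)"
  shows "T \<subseteq> A \<Longrightarrow> x T = y T"
proof (induction T rule: measure_induct_rule[where f = card])
  case (less T)
  have "finite T" using less.prems assms(1) finite_subset by blast
  have "x S = y S" if "S \<in> Pow T - {T}" for S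
  proof -
    have "card S < card T" using that \<open>finite T\<close> psubset_card_mono by blast
    then show ?thesis using less.IH[of S] that less.prems by auto
  qed
  then have "(\<Sum>S\<in>Pow T - {T}. x S) = (\<Sum>S\<in>Pow T - {T}. y S)" by (rule sum.cong[OF refl])
  moreover have "(\<Sum>S\<in>Pow T. z S) = z T + (\<Sum>S\<in>Pow T - {T}. z S)" for z :: "'a set \<Rightarrow> 'b"
    using sum.remove[of "Pow T" T z] \<open>finite T\<close> by simp
  ultimately show ?case using sums[OF less.prems] by (metis add_right_cancel)
qed

lemma sum_L_coeff_composition_monomial:
  assumes "strict_mono r" "r 0 = 0" "r K = n" and T: "r ` {1..<K} = T" "T \<subseteq> {1..<n}"
  shows "(\<Sum>S\<in>Pow {1..<n}. x S * L_coeff S n (composition_monomial r K)) = (\<Sum>S\<in>Pow T. x S)"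
proof -
  have "(\<Sum>S\<in>Pow {1..<n}. x S * L_coeff S n (composition_monomial r K))
      = (\<Sum>S\<in>Pow {1..<n}. if S \<subseteq> T then x S else 0)"
    using L_coeff_composition_monomial[OF assms(1-3)] T(1) by (intro sum.cong) auto
  also have "\<dots> = (\<Sum>S\<in>Pow T. x S)" using T(2) by (simp add: sum_Pow_if_subset)
  finally show ?thesis .
qed

text \<open>The fundamental
  quasisymmetric functions are linearly independent: the coefficient of the composition monomial
  with partial sums \<open>T\<close> in \<open>\<Sum>S. x S * L_{S,n}\<close> is \<open>\<Sum>S\<subseteq>T. x S\<close>, and these sums determine \<open>x\<close>.\<close>
lemma omega_coefficients:
  fixes c d :: "nat set \<Rightarrow> int"
  assumes n: "1 \<le> n"
    and omega: "\<forall>a\<in>monomials. (\<Sum>S\<in>Pow {1..<n}. d S * L_coeff ({1..<n} - S) n a)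
                               = (\<Sum>S\<in>Pow {1..<n}. c S * L_coeff S n a)"
    and R: "R \<subseteq> {1..<n}"
  shows "c R = d ({1..<n} - R)"
proof (rule sum_Pow_eq_imp_eq[OF _ _ R])
  fix T assume T: "T \<subseteq> {1..<n}"
  obtain r :: "nat \<Rightarrow> nat" and K where r: "strict_mono r" "r 0 = 0" "r K = n" "r ` {1..<K} = T"
    using composition_exists[OF T n] by blast
  let ?a = "composition_monomial r K"
  have "(\<Sum>S\<in>Pow T. c S) = (\<Sum>S\<in>Pow {1..<n}. c S * L_coeff S n ?a)"
    using sum_L_coeff_composition_monomial[OF r T] by simp
  also have "\<dots> = (\<Sum>S\<in>Pow {1..<n}. d S * L_coeff ({1..<n} - S) n ?a)"
    using omega composition_monomial_in_monomials by simp
  also have "\<dots> = (\<Sum>S\<in>Pow {1..<n}. d ({1..<n} - S) * L_coeff S n ?a)"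
    using sum_Pow_complement[of "{1..<n}" "\<lambda>S. d ({1..<n} - S) * L_coeff S n ?a"]
    by (simp add: Pow_def double_diff)
  also have "\<dots> = (\<Sum>S\<in>Pow T. d ({1..<n} - S))"
    using sum_L_coeff_composition_monomial[OF r T] by simp
  finally show "(\<Sum>S\<in>Pow T. c S) = (\<Sum>S\<in>Pow T. d ({1..<n} - S))" .
qed simp

section \<open>Ranks and chains\<close>

locale finite_poset =
  fixes P :: "'a::order set"
  assumes finite_P: "finite P"
begin

lemma finite_chain: "is_chain P C \<Longrightarrow> finite C"
  using finite_P finite_subset by (auto simp: is_chain_def)

lemma finite_rank_candidates: "finite {card C - 1 | C. is_chain P C \<and> (\<forall>y\<in>C. y \<le> x)}"
proof -
  have "{C. is_chain P C \<and> (\<forall>y\<in>C. y \<le> x)} \<subseteq> Pow P" by (auto simp: is_chain_def)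
  then have "finite {C. is_chain P C \<and> (\<forall>y\<in>C. y \<le> x)}" using finite_P finite_subset by blast
  then show ?thesis by (simp add: setcompr_eq_image)
qed

lemma card_chain_below_le_rank: "is_chain P C \<Longrightarrow> \<forall>y\<in>C. y \<le> x \<Longrightarrow> card C - 1 \<le> rank P x"
  unfolding rank_def by (rule Max_ge[OF finite_rank_candidates]) blast

lemma rank_attained: "\<exists>C. is_chain P C \<and> (\<forall>y\<in>C. y \<le> x) \<and> rank P x = card C - 1"
proof -
  have "is_chain P {}" by (simp add: is_chain_def)
  then have "{card C - 1 | C. is_chain P C \<and> (\<forall>y\<in>C. y \<le> x)} \<noteq> {}" by blast
  from Max_in[OF finite_rank_candidates this] show ?thesis unfolding rank_def by auto
qed

lemma rank_strict_mono:
  assumes "x \<in> P" "y \<in> P" "x < y"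
  shows "rank P x < rank P y"
proof -
  obtain C where C: "is_chain P C" "\<forall>z\<in>C. z \<le> x" "rank P x = card C - 1"
    using rank_attained by blast
  have "finite C" using finite_chain C(1) .
  have "y \<notin> C" using C(2) assms(3) by (auto dest: leD)
  have below_y: "\<forall>z\<in>insert y (insert x C). z \<le> y"
    using C(2) assms(3) by (auto intro: order_trans)
  have "is_chain P (insert y (insert x C))"
    using C(1,2) assms below_y unfolding is_chain_def by auto
  then have "card (insert y (insert x C)) - 1 \<le> rank P y"
    using card_chain_below_le_rank below_y by blast
  moreover have "card (insert y C) \<le> card (insert y (insert x C))"
    using \<open>finite C\<close> by (intro card_mono) auto
  moreover have "card {x, y} \<le> card (insert y (insert x C))"
    using \<open>finite C\<close> by (intro card_mono) auto
  ultimately show ?thesis using C(3) \<open>finite C\<close> \<open>y \<notin> C\<close> assms(3) by auto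
qed

lemma rank_mono: "x \<in> P \<Longrightarrow> y \<in> P \<Longrightarrow> x \<le> y \<Longrightarrow> rank P x \<le> rank P y"
  using rank_strict_mono[of x y] by (cases "x = y") (auto simp: less_le)

lemma chain_less_iff_rank_less:
  assumes "is_chain P C" "x \<in> C" "y \<in> C"
  shows "x < y \<longleftrightarrow> rank P x < rank P y"
proof -
  have "x \<in> P" "y \<in> P" "x \<le> y \<or> y \<le> x" using assms by (auto simp: is_chain_def)
  then show ?thesis using rank_strict_mono rank_mono by (metis leD le_less)
qed

lemma inj_on_rank_chain:
  assumes "is_chain P C"
  shows "inj_on (rank P) C"
proof (rule inj_onI)
  fix x y assume xy: "x \<in> C" "y \<in> C" "rank P x = rank P y"
  then have "x \<le> y \<or> y \<le> x" using assms by (auto simp: is_chain_def)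
  then show "x = y"
    using chain_less_iff_rank_less[OF assms xy(1,2)] chain_less_iff_rank_less[OF assms xy(2,1)] xy(3)
    by (auto simp: le_less)
qed

lemma chain_filter_rank_image:
  assumes "is_chain P m" "E \<subseteq> m"
  shows "{x \<in> m. rank P x \<in> rank P ` E} = E"
  using assms inj_onD[OF inj_on_rank_chain[OF assms(1)]] by blast

lemma extend_to_maximal_chain:
  assumes "is_chain P C"
  shows "\<exists>m\<in>maximal_chains P. C \<subseteq> m"
proof -
  have "\<exists>m. (is_chain P m \<and> C \<subseteq> m) \<and> (\<forall>D. is_chain P D \<and> C \<subseteq> D \<longrightarrow> card D \<le> card m)"
  proof (rule ex_has_greatest_nat[where f = card and b = "Suc (card P)"])
    show "is_chain P C \<and> C \<subseteq> C" using assms by simp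
    show "\<forall>D. is_chain P D \<and> C \<subseteq> D \<longrightarrow> card D < Suc (card P)"
      using finite_P card_mono by (auto simp: is_chain_def less_Suc_eq_le)
  qed
  then obtain m where m: "is_chain P m" "C \<subseteq> m"
    and largest: "\<And>D. is_chain P D \<Longrightarrow> C \<subseteq> D \<Longrightarrow> card D \<le> card m"
    by blast
  have "D = m" if "is_chain P D" "m \<subseteq> D" for D
    using largest[OF that(1)] that m(2) finite_chain card_seteq by blast
  then show ?thesis using m unfolding maximal_chains_def by blast
qed

lemma chain_of_sorted_list:
  assumes "set ts \<subseteq> P" "sorted_wrt (<) ts"
  shows "is_chain P (set ts)"
  unfolding is_chain_def
proof (intro conjI ballI)
  fix x y assume "x \<in> set ts" "y \<in> set ts"
  then obtain i j where "i < length ts" "j < length ts" "x = ts ! i" "y = ts ! j"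
    by (auto simp: in_set_conv_nth)
  then show "x \<le> y \<or> y \<le> x"
    using sorted_wrt_nth_less[OF assms(2), of i j] sorted_wrt_nth_less[OF assms(2), of j i]
    by (cases i j rule: linorder_cases) auto
qed (fact assms(1))

lemma sorted_list_of_chain:
  assumes E: "is_chain P E" "rank P ` E = set ns" and ns: "sorted_wrt (<) ns"
  shows "\<exists>ts. set ts = E \<and> sorted_wrt (<) ts \<and> map (rank P) ts = ns"
proof (intro exI conjI)
  note inj = inj_on_rank_chain[OF E(1)]
  show "set (map (the_inv_into E (rank P)) ns) = E"
    using the_inv_into_onto[OF inj] E(2) by simp
  show "map (rank P) (map (the_inv_into E (rank P)) ns) = ns"
    using f_the_inv_into_f[OF inj] E(2) by (simp add: map_idI)
  show "sorted_wrt (<) (map (the_inv_into E (rank P)) ns)"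
    unfolding sorted_wrt_map
  proof (rule sorted_wrt_mono_rel[OF _ ns])
    fix a b assume "a \<in> set ns" "b \<in> set ns" "a < b"
    then show "the_inv_into E (rank P) a < the_inv_into E (rank P) b"
      using chain_less_iff_rank_less[OF E(1)] the_inv_into_into[OF inj] f_the_inv_into_f[OF inj]
        E(2) by (metis subset_refl)
  qed
qed

lemma bij_betw_set_rank_lists:
  assumes ns: "sorted_wrt (<) ns"
  shows "bij_betw set {ts. set ts \<subseteq> P \<and> sorted_wrt (<) ts \<and> map (rank P) ts = ns}
    {E. is_chain P E \<and> rank P ` E = set ns}"
proof (rule bij_betw_imageI)
  show "inj_on set {ts. set ts \<subseteq> P \<and> sorted_wrt (<) ts \<and> map (rank P) ts = ns}"
  proof (rule inj_onI)
    fix ts ts' assume ts: "ts \<in> {ts. set ts \<subseteq> P \<and> sorted_wrt (<) ts \<and> map (rank P) ts = ns}"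
      and ts': "ts' \<in> {ts. set ts \<subseteq> P \<and> sorted_wrt (<) ts \<and> map (rank P) ts = ns}"
      and eq: "set ts = set ts'"
    have len: "length ts = length ts'" using ts ts' by (metis (mono_tags) length_map mem_Collect_eq)
    show "ts = ts'"
    proof (rule nth_equalityI[OF len])
      fix i assume "i < length ts"
      moreover have "rank P (ts ! i) = rank P (ts' ! i)"
        using ts ts' len \<open>i < length ts\<close> by (metis (mono_tags) mem_Collect_eq nth_map)
      moreover have "ts ! i \<in> set ts'" "ts' ! i \<in> set ts'"
        using eq len \<open>i < length ts\<close> by (metis nth_mem)+
      ultimately show "ts ! i = ts' ! i"
        using inj_onD[OF inj_on_rank_chain[OF chain_of_sorted_list[of ts']]] ts' by auto
    qed
  qed
  show "set ` {ts. set ts \<subseteq> P \<and> sorted_wrt (<) ts \<and> map (rank P) ts = ns}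
    = {E. is_chain P E \<and> rank P ` E = set ns}"
  proof (intro equalityI subsetI)
    fix E assume "E \<in> set ` {ts. set ts \<subseteq> P \<and> sorted_wrt (<) ts \<and> map (rank P) ts = ns}"
    then obtain ts where ts: "E = set ts" "set ts \<subseteq> P" "sorted_wrt (<) ts" "map (rank P) ts = ns"
      by blast
    then show "E \<in> {E. is_chain P E \<and> rank P ` E = set ns}"
      using chain_of_sorted_list[OF ts(2,3)] by (simp flip: ts(4))
  next
    fix E assume "E \<in> {E. is_chain P E \<and> rank P ` E = set ns}"
    then have E: "is_chain P E" "rank P ` E = set ns" by auto
    then obtain ts where "set ts = E" "sorted_wrt (<) ts" "map (rank P) ts = ns"
      using sorted_list_of_chain[OF _ _ ns] by blast
    moreover have "E \<subseteq> P" using E(1) by (simp add: is_chain_def)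
    ultimately show "E \<in> set ` {ts. set ts \<subseteq> P \<and> sorted_wrt (<) ts \<and> map (rank P) ts = ns}"
      by blast
  qed
qed

end

section \<open>Graded posets and the coefficients of \<open>F_P\<close>\<close>

locale graded_poset = finite_poset P for P :: "'a::order set" +
  fixes zh oh :: 'a and n :: nat
  assumes bounded: "bounded_poset P zh oh" and graded: "graded_of_rank P n"
begin

lemma zh_in: "zh \<in> P" and oh_in: "oh \<in> P"
  and zh_le: "x \<in> P \<Longrightarrow> zh \<le> x" and le_oh: "x \<in> P \<Longrightarrow> x \<le> oh"
  using bounded by (auto simp: bounded_poset_def)

lemma maximal_chain_is_chain: "m \<in> maximal_chains P \<Longrightarrow> is_chain P m"
  by (simp add: maximal_chains_def)

lemma card_maximal_chain: "m \<in> maximal_chains P \<Longrightarrow> card m = n + 1"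
  using graded by (simp add: graded_of_rank_def)

lemma bounds_in_maximal_chain:
  assumes "m \<in> maximal_chains P"
  shows "zh \<in> m" and "oh \<in> m"
proof -
  have "m \<subseteq> P" using maximal_chain_is_chain[OF assms] by (simp add: is_chain_def)
  then have "is_chain P (insert zh m)" "is_chain P (insert oh m)"
    using maximal_chain_is_chain[OF assms] zh_in oh_in zh_le le_oh by (auto simp: is_chain_def)
  then show "zh \<in> m" "oh \<in> m" using assms unfolding maximal_chains_def by blast+
qed

lemma card_chain_le: "is_chain P C \<Longrightarrow> card C \<le> n + 1"
  using extend_to_maximal_chain card_mono finite_chain maximal_chain_is_chain card_maximal_chain
  by metis

lemma rank_zh: "rank P zh = 0"
proof -
  obtain C where C: "is_chain P C" "\<forall>z\<in>C. z \<le> zh" "rank P zh = card C - 1"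
    using rank_attained by blast
  have "C \<subseteq> {zh}" using C(1,2) zh_le by (auto simp: is_chain_def intro: order.antisym)
  then have "card C \<le> 1" using card_mono[of "{zh}" C] by simp
  then show ?thesis using C(3) by simp
qed

lemma rank_oh: "rank P oh = n"
proof -
  obtain m where m: "m \<in> maximal_chains P" using extend_to_maximal_chain[of "{}"]
    by (auto simp: is_chain_def)
  have "n \<le> rank P oh"
    using card_chain_below_le_rank[OF maximal_chain_is_chain[OF m]] card_maximal_chain[OF m] le_oh
      maximal_chain_is_chain[OF m] by (auto simp: is_chain_def)
  moreover obtain C where "is_chain P C" "rank P oh = card C - 1"
    using rank_attained by blast
  then have "rank P oh \<le> n" using card_chain_le by fastforce
  ultimately show ?thesis by simp
qed

lemma rank_le_n: "x \<in> P \<Longrightarrow> rank P x \<le> n"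
  using rank_mono[OF _ oh_in le_oh] rank_oh by simp

lemma rank_eq_0_iff: "x \<in> P \<Longrightarrow> rank P x = 0 \<longleftrightarrow> x = zh"
  using rank_strict_mono[OF zh_in, of x] zh_le[of x] rank_zh by (auto simp: le_less)

lemma rank_eq_n_iff: "x \<in> P \<Longrightarrow> rank P x = n \<longleftrightarrow> x = oh"
  using rank_strict_mono[OF _ oh_in, of x] le_oh[of x] rank_oh by (auto simp: le_less)

lemma rank_image_maximal_chain:
  assumes "m \<in> maximal_chains P"
  shows "rank P ` m = {0..n}"
proof -
  have "rank P ` m \<subseteq> {0..n}"
    using rank_le_n maximal_chain_is_chain[OF assms] by (auto simp: is_chain_def)
  moreover have "card (rank P ` m) = card {0..n}"
    using card_image[OF inj_on_rank_chain[OF maximal_chain_is_chain[OF assms]]]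
      card_maximal_chain[OF assms] by simp
  ultimately show ?thesis using card_subset_eq[of "{0..n}"] by blast
qed

lemma F_multichain_ranks:
  assumes r: "strict_mono r" "r 0 = 0" "r K = n"
    and ts: "length ts = Suc k" "1 \<le> k" "set ts \<subseteq> P" "ts ! 0 = zh" "ts ! k = oh"
      "\<forall>i. 1 \<le> i \<and> i \<le> k \<longrightarrow> ts ! (i - 1) \<le> ts ! i" "ts ! (k - 1) < ts ! k"
      "\<forall>i\<ge>1. composition_monomial r K i =
          (if i \<le> k then rank P (ts ! i) - rank P (ts ! (i - 1)) else 0)"
  shows "k = K" and "\<forall>i\<le>k. rank P (ts ! i) = r i"
proof -
  have in_P: "ts ! i \<in> P" if "i \<le> k" for i using ts(1,3) that by (simp add: subset_code(1))
  have rank_ts: "rank P (ts ! i) = r (min i K)" if "i \<le> k" for i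
    using that
  proof (induction i)
    case 0
    then show ?case using ts(4) rank_zh r(2) by simp
  next
    case (Suc i)
    have "rank P (ts ! i) \<le> rank P (ts ! Suc i)"
      using rank_mono[OF in_P in_P] ts(6) Suc.prems by fastforce
    moreover have "r i \<le> r (Suc i)" using r(1) by (simp add: strict_mono_less_eq)
    moreover have "rank P (ts ! Suc i) - rank P (ts ! i) = composition_monomial r K (Suc i)"
      using ts(8) Suc.prems by simp
    ultimately show ?case
      using Suc by (cases "Suc i \<le> K") (simp_all add: composition_monomial_def)
  qed
  have "r (min k K) = r K" using rank_ts[of k] ts(5) rank_oh r(3) by simp
  then have "K \<le> k" using r(1) by (simp add: strict_mono_eq)
  moreover have "\<not> K \<le> k - 1"
  proof
    assume "K \<le> k - 1"
    then have "rank P (ts ! (k - 1)) = rank P (ts ! k)"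
      using rank_ts[of "k - 1"] rank_ts[of k] \<open>K \<le> k\<close> by simp
    then show False using rank_strict_mono[OF in_P in_P ts(7)] by simp
  qed
  ultimately show "k = K" by simp
  then show "\<forall>i\<le>k. rank P (ts ! i) = r i" using rank_ts by simp
qed

lemma F_multichain_is_rank_list:
  assumes r: "strict_mono r" "r 0 = 0" "r K = n"
    and ts: "length ts = Suc k" "1 \<le> k" "set ts \<subseteq> P" "ts ! 0 = zh" "ts ! k = oh"
      "\<forall>i. 1 \<le> i \<and> i \<le> k \<longrightarrow> ts ! (i - 1) \<le> ts ! i" "ts ! (k - 1) < ts ! k"
      "\<forall>i\<ge>1. composition_monomial r K i =
          (if i \<le> k then rank P (ts ! i) - rank P (ts ! (i - 1)) else 0)"
  shows "sorted_wrt (<) ts \<and> map (rank P) ts = map r [0..<Suc K]"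
proof
  note ranks = F_multichain_ranks[OF assms]
  show "map (rank P) ts = map r [0..<Suc K]"
    using ranks ts(1) by (intro nth_equalityI) (auto simp del: upt_Suc)
  show "sorted_wrt (<) ts"
    unfolding sorted_wrt_iff_nth_Suc_transp[OF transp_on_less]
  proof (intro allI impI)
    fix i assume "Suc i < length ts"
    then have "ts ! i \<le> ts ! Suc i" "rank P (ts ! i) \<noteq> rank P (ts ! Suc i)"
      using ts(6)[rule_format, of "Suc i"] ranks ts(1) r(1) strict_mono_eq[of r i "Suc i"] by auto
    then show "ts ! i < ts ! Suc i" by (auto simp: le_less)
  qed
qed

lemma rank_list_is_F_multichain:
  assumes r: "strict_mono r" "r 0 = 0" "r K = n" and K: "1 \<le> K"
    and ts: "set ts \<subseteq> P" "sorted_wrt (<) ts" "map (rank P) ts = map r [0..<Suc K]"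
  shows "length ts = Suc K" "ts ! 0 = zh" "ts ! K = oh"
    "\<forall>i. 1 \<le> i \<and> i \<le> K \<longrightarrow> ts ! (i - 1) \<le> ts ! i" "ts ! (K - 1) < ts ! K"
    "\<forall>i\<ge>1. composition_monomial r K i =
        (if i \<le> K then rank P (ts ! i) - rank P (ts ! (i - 1)) else 0)"
proof -
  show len: "length ts = Suc K" using arg_cong[OF ts(3), of length] by simp
  have rank_ts: "rank P (ts ! i) = r i" if "i \<le> K" for i
    using arg_cong[OF ts(3), of "\<lambda>xs. xs ! i"] that len by (simp del: upt_Suc add: nth_map_upt)
  have in_P: "ts ! i \<in> P" if "i \<le> K" for i using ts(1) len that by (simp add: subset_code(1))
  have less: "ts ! i < ts ! j" if "i < j" "j \<le> K" for i j
    using sorted_wrt_nth_less[OF ts(2)] that len by simp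
  show "ts ! 0 = zh" "ts ! K = oh"
    using rank_eq_0_iff[OF in_P] rank_eq_n_iff[OF in_P] rank_ts r(2,3) by auto
  have "ts ! (i - 1) \<le> ts ! i" if "1 \<le> i" "i \<le> K" for i using less[of "i - 1" i] that by simp
  then show "\<forall>i. 1 \<le> i \<and> i \<le> K \<longrightarrow> ts ! (i - 1) \<le> ts ! i" "ts ! (K - 1) < ts ! K"
    using less[of "K - 1" K] K by auto
  show "\<forall>i\<ge>1. composition_monomial r K i =
      (if i \<le> K then rank P (ts ! i) - rank P (ts ! (i - 1)) else 0)"
    using rank_ts by (simp add: composition_monomial_def)
qed

lemma F_multichains_eq_rank_lists:
  assumes r: "strict_mono r" "r 0 = 0" "r K = n" and K: "1 \<le> K"
  shows "{ts. let k = length ts - 1 in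
      length ts \<ge> 2 \<and> set ts \<subseteq> P \<and> ts ! 0 = zh \<and> ts ! k = oh \<and>
      (\<forall>i. 1 \<le> i \<and> i \<le> k \<longrightarrow> ts ! (i - 1) \<le> ts ! i) \<and> ts ! (k - 1) < ts ! k \<and>
      (\<forall>i\<ge>1. composition_monomial r K i =
          (if i \<le> k then rank P (ts ! i) - rank P (ts ! (i - 1)) else 0))}
    = {ts. set ts \<subseteq> P \<and> sorted_wrt (<) ts \<and> map (rank P) ts = map r [0..<Suc K]}"
  (is "?F = ?R")
proof (intro set_eqI iffI)
  fix ts assume "ts \<in> ?F"
  then obtain k where "length ts = Suc k" "1 \<le> k" "set ts \<subseteq> P" "ts ! 0 = zh" "ts ! k = oh"
      "\<forall>i. 1 \<le> i \<and> i \<le> k \<longrightarrow> ts ! (i - 1) \<le> ts ! i" "ts ! (k - 1) < ts ! k"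
      "\<forall>i\<ge>1. composition_monomial r K i =
          (if i \<le> k then rank P (ts ! i) - rank P (ts ! (i - 1)) else 0)"
    by (cases ts rule: rev_cases) (auto simp: Let_def)
  from F_multichain_is_rank_list[OF r this] show "ts \<in> ?R" using \<open>set ts \<subseteq> P\<close> by simp
next
  fix ts assume "ts \<in> ?R"
  then have "set ts \<subseteq> P" "sorted_wrt (<) ts" "map (rank P) ts = map r [0..<Suc K]" by simp_all
  from rank_list_is_F_multichain[OF r K this] show "ts \<in> ?F" using K \<open>set ts \<subseteq> P\<close> by (simp add: Let_def)
qed

lemma F_coeff_composition_monomial:
  assumes "strict_mono r" "r 0 = 0" "r K = n" "1 \<le> K"
  shows "F_coeff P zh oh (composition_monomial r K) =
    int (card {E. is_chain P E \<and> rank P ` E = r ` {..K}})"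
proof -
  have "sorted_wrt (<) (map r [0..<Suc K])"
    unfolding sorted_wrt_map
    by (rule sorted_wrt_mono_rel[OF _ sorted_wrt_upt]) (use assms(1) in \<open>auto simp: strict_mono_less\<close>)
  moreover have "set (map r [0..<Suc K]) = r ` {..K}" by (auto simp del: upt_Suc)
  ultimately have "card {ts. set ts \<subseteq> P \<and> sorted_wrt (<) ts \<and> map (rank P) ts = map r [0..<Suc K]}
      = card {E. is_chain P E \<and> rank P ` E = r ` {..K}}"
    using bij_betw_same_card[OF bij_betw_set_rank_lists] by simp
  then show ?thesis unfolding F_coeff_def F_multichains_eq_rank_lists[OF assms] by simp
qed

end

section \<open>Counting maximal chains by descents\<close>

lemma chi_S_eq: "chi_S S w = (if set w \<subseteq> S then (-1) ^ length w else 0)"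
  by (induction w) (auto simp: chi_S_def)

locale good_graded_poset = graded_poset P zh oh n for P :: "'a::order set" and zh oh n +
  fixes U :: "nat \<Rightarrow> 'a set \<Rightarrow> 'a set"
  assumes good: "good_action P zh oh n U"

sublocale good_graded_poset \<subseteq> zero_hecke_action "maximal_chains P" n U
  using good unfolding good_action_def by unfold_locales auto

context good_graded_poset
begin

lemma omegaF_eq_ch: "omegaF_eq_ch P zh oh n U"
  using good by (simp add: good_action_def)

lemma foldr_keeps:
  assumes "set w \<subseteq> {1..<n}" "m \<in> maximal_chains P" "x \<in> m" "rank P x \<notin> set w"
  shows "x \<in> foldr U w m"
  using assms
proof (induction w)
  case (Cons i w)
  have "{x \<in> U i (foldr U w m). rank P x \<noteq> i} = {x \<in> foldr U w m. rank P x \<noteq> i}"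
    using good Cons.prems foldr_closed unfolding good_action_def by simp
  then show ?case using Cons by auto
qed simp

lemma extend_to_maximal_chain_descents_subset:
  assumes "is_chain P E" "rank P ` E \<subseteq> insert 0 (insert n S)"
  shows "\<exists>m\<in>maximal_chains P. E \<subseteq> m \<and> descents n U m \<subseteq> S"
proof -
  obtain w where w: "set w = {1..<n} - S"
    "\<forall>m\<in>maximal_chains P. \<forall>i\<in>{1..<n} - S. U i (foldr U w m) = foldr U w m"
    using absorbing_word_exists[of "{1..<n} - S"] by blast
  obtain m where m: "m \<in> maximal_chains P" "E \<subseteq> m" using extend_to_maximal_chain assms(1) by blast
  have "foldr U w m \<in> maximal_chains P" using foldr_closed w(1) m(1) by auto
  moreover have "rank P x \<notin> set w" if "x \<in> E" for x using assms(2) that w(1) by fastforce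
  then have "E \<subseteq> foldr U w m" using foldr_keeps w(1) m by blast
  moreover have "descents n U (foldr U w m) \<subseteq> S" using w(2) m(1) by (auto simp: descents_def)
  ultimately show ?thesis by blast
qed

text \<open>The fixed points of a word absorbing all \<open>U i\<close>, \<open>i \<notin> S\<close>, are the maximal chains with
  descents in \<open>S\<close>, so evaluating \<open>\<chi>_P\<close> on that word counts them.\<close>
lemma card_descents_subset_eq_sum:
  assumes chi: "\<forall>w. set w \<subseteq> {1..<n} \<longrightarrow> chi_P P U w = (\<Sum>R\<in>Pow {1..<n}. c R * chi_S R w)"
  shows "int (card {m \<in> maximal_chains P. descents n U m \<subseteq> S})
    = (\<Sum>R\<in>Pow {1..<n}. if {1..<n} - S \<subseteq> R then c R else 0)"
proof -
  obtain w where w: "set w = {1..<n} - S"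
    "\<forall>m\<in>maximal_chains P. \<forall>i\<in>{1..<n} - S. U i (foldr U w m) = foldr U w m"
    using absorbing_word_exists[of "{1..<n} - S"] by blast
  have "foldr U w m = m \<longleftrightarrow> descents n U m \<subseteq> S" if "m \<in> maximal_chains P" for m
    unfolding foldr_fixed_iff[OF w that] descents_def by blast
  then have "{m \<in> maximal_chains P. foldr U w m = m} = {m \<in> maximal_chains P. descents n U m \<subseteq> S}"
    by blast
  then have "(-1) ^ length w * int (card {m \<in> maximal_chains P. descents n U m \<subseteq> S})
      = chi_P P U w"
    by (simp add: chi_P_def)
  also have "\<dots> = (\<Sum>R\<in>Pow {1..<n}. c R * chi_S R w)" using chi w(1) by auto
  also have "\<dots> = (\<Sum>R\<in>Pow {1..<n}. (-1) ^ length w * (if {1..<n} - S \<subseteq> R then c R else 0))"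
    by (intro sum.cong) (auto simp: chi_S_eq w(1))
  also have "\<dots> = (-1) ^ length w * (\<Sum>R\<in>Pow {1..<n}. if {1..<n} - S \<subseteq> R then c R else 0)"
    by (simp add: sum_distrib_left)
  finally show ?thesis by simp
qed

lemma card_rank_set_chains_eq_sum:
  assumes n: "1 \<le> n" and S: "S \<subseteq> {1..<n}"
    and F: "\<forall>a\<in>monomials. F_coeff P zh oh a = (\<Sum>Q\<in>Pow {1..<n}. d Q * L_coeff Q n a)"
  shows "int (card {E. is_chain P E \<and> rank P ` E = insert 0 (insert n S)}) = (\<Sum>Q\<in>Pow S. d Q)"
proof -
  obtain r :: "nat \<Rightarrow> nat" and K where r: "strict_mono r" "r 0 = 0" "r K = n" "1 \<le> K" "r ` {1..<K} = S"
    using composition_exists[OF S n] by blast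
  have "{..K} = insert 0 (insert K {1..<K})" using r(4) by auto
  then have "r ` {..K} = insert 0 (insert n S)" using r by simp
  then have "int (card {E. is_chain P E \<and> rank P ` E = insert 0 (insert n S)})
      = F_coeff P zh oh (composition_monomial r K)"
    using F_coeff_composition_monomial[OF r(1-4)] by simp
  also have "\<dots> = (\<Sum>Q\<in>Pow S. d Q)"
    using F composition_monomial_in_monomials sum_L_coeff_composition_monomial[OF r(1-3,5) S] by simp
  finally show ?thesis .
qed

lemma card_descents_subset:
  assumes n: "1 \<le> n" and S: "S \<subseteq> {1..<n}"
  shows "card {m \<in> maximal_chains P. descents n U m \<subseteq> S}
    = card {E. is_chain P E \<and> rank P ` E = insert 0 (insert n S)}"
proof -
  obtain c d where
    chi: "\<forall>w. set w \<subseteq> {1..<n} \<longrightarrow> chi_P P U w = (\<Sum>R\<in>Pow {1..<n}. c R * chi_S R w)" and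
    F: "\<forall>a\<in>monomials. F_coeff P zh oh a = (\<Sum>Q\<in>Pow {1..<n}. d Q * L_coeff Q n a)" and
    omega: "\<forall>a\<in>monomials. (\<Sum>Q\<in>Pow {1..<n}. d Q * L_coeff ({1..<n} - Q) n a)
                          = (\<Sum>R\<in>Pow {1..<n}. c R * L_coeff R n a)"
    using omegaF_eq_ch unfolding omegaF_eq_ch_def by blast
  define U0 where "U0 = {1..<n :: nat}"
  have "finite U0" "S \<subseteq> U0" using S by (simp_all add: U0_def)
  have "int (card {m \<in> maximal_chains P. descents n U m \<subseteq> S})
      = (\<Sum>R\<in>Pow U0. if U0 - S \<subseteq> R then c R else 0)"
    using card_descents_subset_eq_sum[OF chi] by (simp add: U0_def)
  also have "\<dots> = (\<Sum>R\<in>Pow U0. if U0 - S \<subseteq> R then d (U0 - R) else 0)"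
    using omega_coefficients[OF n omega] by (intro sum.cong) (auto simp: U0_def)
  also have "\<dots> = (\<Sum>R\<in>Pow U0. (\<lambda>Q. if Q \<subseteq> S then d Q else 0) (U0 - R))"
    using \<open>S \<subseteq> U0\<close> by (intro sum.cong) auto
  also have "\<dots> = (\<Sum>Q\<in>Pow U0. if Q \<subseteq> S then d Q else 0)"
    by (rule sum_Pow_complement[OF \<open>finite U0\<close>])
  also have "\<dots> = int (card {E. is_chain P E \<and> rank P ` E = insert 0 (insert n S)})"
    using sum_Pow_if_subset[OF \<open>finite U0\<close> \<open>S \<subseteq> U0\<close>] card_rank_set_chains_eq_sum[OF n S F]
    by (simp add: U0_def)
  finally show ?thesis by simp
qed

lemma filter_ranks_image:
  assumes S: "S \<subseteq> {1..<n}"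
  defines "R \<equiv> insert 0 (insert n S)"
  shows "(\<lambda>m. {x \<in> m. rank P x \<in> R}) ` {m \<in> maximal_chains P. descents n U m \<subseteq> S}
    = {E. is_chain P E \<and> rank P ` E = R}"
proof (intro equalityI subsetI)
  fix E assume "E \<in> (\<lambda>m. {x \<in> m. rank P x \<in> R}) ` {m \<in> maximal_chains P. descents n U m \<subseteq> S}"
  then obtain m where m: "m \<in> maximal_chains P" "E = {x \<in> m. rank P x \<in> R}" by auto
  then have "is_chain P E" using maximal_chain_is_chain[OF m(1)] by (auto simp: is_chain_def)
  moreover have "rank P ` E = rank P ` m \<inter> R" using m(2) by auto
  then have "rank P ` E = R" using rank_image_maximal_chain[OF m(1)] S by (auto simp: R_def)
  ultimately show "E \<in> {E. is_chain P E \<and> rank P ` E = R}" by simp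
next
  fix E assume "E \<in> {E. is_chain P E \<and> rank P ` E = R}"
  then have E: "is_chain P E" "rank P ` E = R" by simp_all
  then have "rank P ` E \<subseteq> insert 0 (insert n S)" by (simp add: R_def)
  then obtain m where m: "m \<in> maximal_chains P" "E \<subseteq> m" "descents n U m \<subseteq> S"
    using extend_to_maximal_chain_descents_subset[OF E(1)] by blast
  moreover have "{x \<in> m. rank P x \<in> R} = E"
    using chain_filter_rank_image[OF maximal_chain_is_chain[OF m(1)] m(2)] E(2) by simp
  ultimately show "E \<in> (\<lambda>m. {x \<in> m. rank P x \<in> R}) ` {m \<in> maximal_chains P. descents n U m \<subseteq> S}"
    by blast
qed

lemma inj_on_filter_ranks:
  assumes S: "S \<subseteq> {1..<n}"
  shows "inj_on (\<lambda>m. {x \<in> m. rank P x \<in> insert 0 (insert n S)})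
    {m \<in> maximal_chains P. descents n U m \<subseteq> S}"
proof (cases "n = 0")
  case True
  \<comment> \<open>Here \<open>F_P = 0\<close> and the counting argument fails, but \<open>{zh}\<close> is the only maximal chain.\<close>
  have "m = {zh}" if "m \<in> maximal_chains P" for m
  proof -
    have "card m = 1" "zh \<in> m" using card_maximal_chain[OF that] bounds_in_maximal_chain[OF that] True
      by simp_all
    then show ?thesis by (auto simp: card_1_singleton_iff)
  qed
  then have "{m \<in> maximal_chains P. descents n U m \<subseteq> S} \<subseteq> {{zh}}" by blast
  then show ?thesis by (rule inj_on_subset[rotated]) simp
next
  case False
  have "{m \<in> maximal_chains P. descents n U m \<subseteq> S} \<subseteq> Pow P"
    using maximal_chain_is_chain by (auto simp: is_chain_def)
  then have "finite {m \<in> maximal_chains P. descents n U m \<subseteq> S}" using finite_P finite_subset by blast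
  then show ?thesis
    using card_descents_subset[OF _ S] filter_ranks_image[OF S] False
    by (intro eq_card_imp_inj_on) simp_all
qed

lemma ex1_maximal_chain_descents_subset:
  assumes S: "S \<subseteq> {1..<n}" and C: "is_chain P C" "rank P ` (C - {zh, oh}) = S"
  shows "\<exists>!m. m \<in> maximal_chains P \<and> C \<subseteq> m \<and> descents n U m \<subseteq> S"
proof -
  define E where "E = insert zh (insert oh C)"
  have E: "is_chain P E" using C(1) zh_in oh_in zh_le le_oh by (auto simp: E_def is_chain_def)
  have "E = insert zh (insert oh (C - {zh, oh}))" by (auto simp: E_def)
  then have rank_E: "rank P ` E = insert 0 (insert n S)" using C(2) rank_zh rank_oh by simp
  then have "rank P ` E \<subseteq> insert 0 (insert n S)" by simp
  then obtain m where m: "m \<in> maximal_chains P" "E \<subseteq> m" "descents n U m \<subseteq> S"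
    using extend_to_maximal_chain_descents_subset[OF E] by blast
  show ?thesis
  proof (rule ex1I)
    show "m \<in> maximal_chains P \<and> C \<subseteq> m \<and> descents n U m \<subseteq> S" using m by (auto simp: E_def)
  next
    fix m' assume m': "m' \<in> maximal_chains P \<and> C \<subseteq> m' \<and> descents n U m' \<subseteq> S"
    then have "E \<subseteq> m'" using bounds_in_maximal_chain by (auto simp: E_def)
    then have "{x \<in> m'. rank P x \<in> rank P ` E} = {x \<in> m. rank P x \<in> rank P ` E}"
      using chain_filter_rank_image maximal_chain_is_chain m(1,2) m' by simp
    then have "{x \<in> m'. rank P x \<in> insert 0 (insert n S)} = {x \<in> m. rank P x \<in> insert 0 (insert n S)}"
      unfolding rank_E .
    then show "m' = m" using inj_onD[OF inj_on_filter_ranks[OF S]] m m' by blast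
  qed
qed

end

theorem mainTheorem14:
  fixes P :: "'a::order set" and zh oh :: 'a and n :: nat
    and U :: "nat \<Rightarrow> 'a set \<Rightarrow> 'a set" and S :: "nat set" and C :: "'a set"
  assumes "finite P"
    and "bounded_poset P zh oh"
    and "graded_of_rank P n"
    and "bowtie_free P"
    and "good_action P zh oh n U"
    and "S \<subseteq> {1..<n}"
    and "is_chain P C"
    and "rank P ` (C - {zh, oh}) = S"
  shows "\<exists>!m. m \<in> maximal_chains P \<and> C \<subseteq> m \<and> descents n U m \<subseteq> S"
proof -
  interpret good_graded_poset P zh oh n U
    using assms(1,2,3,5) by unfold_locales
  show ?thesis using ex1_maximal_chain_descents_subset assms(6-8) .
qed

end
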